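(* Let $\Gamma$ be a finite, connected, labelled simplicial graph on at least three vertices, and let $H,V$ be two standard big chunk parabolic subgroups of $A_\Gamma$. If $H\le kVk^{-1}$ for some $k\in A_\Gamma$, then $H=V$ and $k\in H$.
   Context: Labels $m_{ab}\in\mathbb{Z}_{\ge2}$ on edges; $A_\Gamma=\langle V(\Gamma)\mid \mathrm{prod}(a,b,m_{ab})=\mathrm{prod}(b,a,m_{ab})\ \forall\{a,b\}\in E(\Gamma)\rangle$, with $\mathrm{prod}(u,v,n)$ the prefix of length $n$ of $uvuv\cdots$. For a full subgraph $\Lambda$, $A_\Lambda=\langle V(\Lambda)\rangle\le A_\Gamma$ (standard parabolic subgroup). A big chunk of $\Gamma$ is a connected induced subgraph with no separating vertex (a vertex whose removal disconnects it), maximal with respect to inclusion among such subgraphs. A standard big chunk parabolic is $A_\Lambda$ for a big chunk $\Lambda$. *)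

theory Defs
  imports Main
begin

text \<open>Words in the generators: a letter (a, True) is a, (a, False) is a^{-1}.\<close>

type_synonym 'v letter = "'v \<times> bool"
type_synonym 'v word = "'v letter list"

definition labelled_simplicial_graph :: "'v set \<Rightarrow> ('v \<Rightarrow> 'v \<Rightarrow> bool) \<Rightarrow> ('v \<Rightarrow> 'v \<Rightarrow> nat) \<Rightarrow> bool" where
  "labelled_simplicial_graph VV E m \<longleftrightarrow>
     (\<forall>a b. E a b \<longrightarrow> a \<in> VV \<and> b \<in> VV) \<and>
     (\<forall>a. \<not> E a a) \<and>
     (\<forall>a b. E a b \<longrightarrow> E b a) \<and>
     (\<forall>a b. E a b \<longrightarrow> m a b = m b a \<and> 2 \<le> m a b)"

definition flip :: "'v letter \<Rightarrow> 'v letter" where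
  "flip x = (fst x, \<not> snd x)"

definition winv :: "'v word \<Rightarrow> 'v word" where
  "winv w = rev (map flip w)"

definition alt_prod :: "'v \<Rightarrow> 'v \<Rightarrow> nat \<Rightarrow> 'v word" where
  "alt_prod a b n = map (\<lambda>i. if even i then (a, True) else (b, True)) [0..<n]"

text \<open>The congruence on words over VV defining the Artin group A_Gamma:
  generated by free reduction and the Artin relations, closed under contexts.\<close>
inductive artin_eq :: "'v set \<Rightarrow> ('v \<Rightarrow> 'v \<Rightarrow> bool) \<Rightarrow> ('v \<Rightarrow> 'v \<Rightarrow> nat) \<Rightarrow> 'v word \<Rightarrow> 'v word \<Rightarrow> bool"
  for VV E m where
  refl: "set w \<subseteq> VV \<times> UNIV \<Longrightarrow> artin_eq VV E m w w"
| sym: "artin_eq VV E m u w \<Longrightarrow> artin_eq VV E m w u"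
| trans: "artin_eq VV E m u v \<Longrightarrow> artin_eq VV E m v w \<Longrightarrow> artin_eq VV E m u w"
| red: "set u \<subseteq> VV \<times> UNIV \<Longrightarrow> set w \<subseteq> VV \<times> UNIV \<Longrightarrow> fst x \<in> VV \<Longrightarrow>
        artin_eq VV E m (u @ [x, flip x] @ w) (u @ w)"
| braid: "set u \<subseteq> VV \<times> UNIV \<Longrightarrow> set w \<subseteq> VV \<times> UNIV \<Longrightarrow> a \<in> VV \<Longrightarrow> b \<in> VV \<Longrightarrow> E a b \<Longrightarrow>
        artin_eq VV E m (u @ alt_prod a b (m a b) @ w) (u @ alt_prod b a (m a b) @ w)"

definition artin_elem :: "'v set \<Rightarrow> ('v \<Rightarrow> 'v \<Rightarrow> bool) \<Rightarrow> ('v \<Rightarrow> 'v \<Rightarrow> nat) \<Rightarrow> 'v word \<Rightarrow> 'v word set" where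
  "artin_elem VV E m w = {w'. artin_eq VV E m w w'}"

definition std_parabolic :: "'v set \<Rightarrow> ('v \<Rightarrow> 'v \<Rightarrow> bool) \<Rightarrow> ('v \<Rightarrow> 'v \<Rightarrow> nat) \<Rightarrow> 'v set \<Rightarrow> 'v word set set" where
  "std_parabolic VV E m L = {artin_elem VV E m w | w. set w \<subseteq> L \<times> UNIV}"

definition conj_parabolic :: "'v set \<Rightarrow> ('v \<Rightarrow> 'v \<Rightarrow> bool) \<Rightarrow> ('v \<Rightarrow> 'v \<Rightarrow> nat) \<Rightarrow> 'v word \<Rightarrow> 'v set \<Rightarrow> 'v word set set" where
  "conj_parabolic VV E m k L = {artin_elem VV E m (k @ w @ winv k) | w. set w \<subseteq> L \<times> UNIV}"

definition connected_on :: "('v \<Rightarrow> 'v \<Rightarrow> bool) \<Rightarrow> 'v set \<Rightarrow> bool" where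
  "connected_on E S \<longleftrightarrow> S \<noteq> {} \<and>
     (\<forall>x\<in>S. \<forall>y\<in>S. (x, y) \<in> {(a, b). a \<in> S \<and> b \<in> S \<and> E a b}\<^sup>*)"

definition separating_vertex :: "('v \<Rightarrow> 'v \<Rightarrow> bool) \<Rightarrow> 'v set \<Rightarrow> 'v \<Rightarrow> bool" where
  "separating_vertex E S v \<longleftrightarrow> v \<in> S \<and> \<not> connected_on E (S - {v})"

definition chunk :: "'v set \<Rightarrow> ('v \<Rightarrow> 'v \<Rightarrow> bool) \<Rightarrow> 'v set \<Rightarrow> bool" where
  "chunk VV E S \<longleftrightarrow> S \<subseteq> VV \<and> connected_on E S \<and> (\<forall>v\<in>S. \<not> separating_vertex E S v)"

definition big_chunk :: "'v set \<Rightarrow> ('v \<Rightarrow> 'v \<Rightarrow> bool) \<Rightarrow> 'v set \<Rightarrow> bool" where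
  "big_chunk VV E S \<longleftrightarrow> chunk VV E S \<and> (\<forall>T. chunk VV E T \<and> S \<subseteq> T \<longrightarrow> T = S)"

end

theory Submission
  imports Defs Complex_Main
begin

text \<open>Induction on the number of vertices. If \<open>\<Gamma>\<close> has no separating vertex, it is its own
  unique big chunk. Otherwise a separating vertex \<open>v\<close> splits \<open>\<Gamma> = X \<union> Y\<close> with \<open>X \<inter> Y = {v}\<close>
  and no edges between \<open>X - {v}\<close> and \<open>Y - {v}\<close>, so \<open>A\<^sub>\<Gamma>\<close> is the amalgam of \<open>A\<^sub>X\<close> and
  \<open>A\<^sub>Y\<close> over \<open>\<langle>v\<rangle>\<close>, and every chunk lies in \<open>X\<close> or in \<open>Y\<close>; say \<open>L1 \<subseteq> X\<close>.
  Write \<open>k = g k'\<close> in normal form, with \<open>g \<in> A\<^sub>X\<close> and \<open>k'\<close> not starting with an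
  \<open>X\<close>-syllable. Two distinct vertices of \<open>L1\<close> are distinct in \<open>A\<^sub>\<Gamma>\<close> (Tits representation),
  and their conjugates by \<open>g\<close> have exponent sum 1, so one of them, \<open>c\<close>, has
  \<open>g\<^sup>-\<^sup>1 c g \<notin> \<langle>v\<rangle>\<close>. The normal form of \<open>k\<^sup>-\<^sup>1 c k = k'\<^sup>-\<^sup>1 (g\<^sup>-\<^sup>1 c g) k'\<close> then has an
  \<open>X\<close>-syllable followed by \<open>k'\<close>, while \<open>k\<^sup>-\<^sup>1 c k\<close> lies in the factor containing \<open>L2\<close>, whose
  elements have at most one syllable. Hence \<open>k' = 1\<close> and \<open>L2 \<subseteq> X\<close>, and the retraction
  \<open>A\<^sub>\<Gamma> \<rightarrow> A\<^sub>X\<close> collapsing \<open>Y\<close> onto \<open>v\<close> transports the inclusion to the smaller graph \<open>X\<close>.\<close>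

section \<open>Words and the Artin congruence\<close>

abbreviation word_over :: "'v set \<Rightarrow> 'v word \<Rightarrow> bool" where
  "word_over A w \<equiv> set w \<subseteq> A \<times> UNIV"

lemma flip_flip [simp]: "flip (flip x) = x"
  by (simp add: flip_def)

lemma fst_flip [simp]: "fst (flip x) = fst x"
  by (simp add: flip_def)

lemma winv_Nil [simp]: "winv [] = []"
  by (simp add: winv_def)

lemma winv_Cons [simp]: "winv (x # w) = winv w @ [flip x]"
  by (simp add: winv_def)

lemma winv_append [simp]: "winv (u @ w) = winv w @ winv u"
  by (simp add: winv_def)

lemma winv_winv [simp]: "winv (winv w) = w"
  by (simp add: winv_def rev_map comp_def)

lemma word_over_winv [simp]: "word_over A (winv w) \<longleftrightarrow> word_over A w"
  by (auto simp: winv_def flip_def)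

lemma alt_prod_Suc: "alt_prod a b (Suc n) = (a, True) # alt_prod b a n"
  unfolding alt_prod_def by (simp add: upt_conv_Cons map_Suc_upt[symmetric] del: upt_Suc)

lemma artin_eq_word_over: "artin_eq VV E m u w \<Longrightarrow> word_over VV u \<and> word_over VV w"
  by (induction rule: artin_eq.induct) (auto simp: alt_prod_def flip_def)

lemma artin_eq_context:
  "artin_eq VV E m a b \<Longrightarrow> word_over VV u \<Longrightarrow> word_over VV w \<Longrightarrow>
    artin_eq VV E m (u @ a @ w) (u @ b @ w)"
proof (induction rule: artin_eq.induct)
  case (refl w')
  then show ?case by (intro artin_eq.refl) auto
next
  case (sym u' w')
  then show ?case by (blast intro: artin_eq.sym)
next
  case (trans u' v' w')
  then show ?case by (blast intro: artin_eq.trans)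
next
  case (red u' w' x)
  then have "artin_eq VV E m ((u @ u') @ [x, flip x] @ (w' @ w)) ((u @ u') @ (w' @ w))"
    by (intro artin_eq.red) auto
  then show ?case by simp
next
  case (braid u' w' a b)
  then have "artin_eq VV E m ((u @ u') @ alt_prod a b (m a b) @ (w' @ w))
      ((u @ u') @ alt_prod b a (m a b) @ (w' @ w))"
    by (intro artin_eq.braid) auto
  then show ?case by simp
qed

lemma artin_eq_append:
  assumes "artin_eq VV E m a b" and "artin_eq VV E m c d"
  shows "artin_eq VV E m (a @ c) (b @ d)"
proof -
  have "artin_eq VV E m ([] @ a @ c) ([] @ b @ c)"
    using assms artin_eq_word_over[OF assms(2)] by (intro artin_eq_context) auto
  moreover have "artin_eq VV E m (b @ c @ []) (b @ d @ [])"
    using assms artin_eq_word_over[OF assms(1)] by (intro artin_eq_context) auto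
  ultimately show ?thesis
    by (auto intro: artin_eq.trans)
qed

lemma artin_eq_append_left:
  "artin_eq VV E m a b \<Longrightarrow> word_over VV u \<Longrightarrow> artin_eq VV E m (u @ a) (u @ b)"
  using artin_eq_append artin_eq.refl by blast

lemma artin_eq_append_right:
  "artin_eq VV E m a b \<Longrightarrow> word_over VV u \<Longrightarrow> artin_eq VV E m (a @ u) (b @ u)"
  using artin_eq_append artin_eq.refl by blast

lemma artin_eq_cancel_pair: "fst x \<in> VV \<Longrightarrow> artin_eq VV E m [x, flip x] []"
  using artin_eq.red[of "[]" VV "[]" x E m] by simp

lemma artin_eq_winv_right: "word_over VV w \<Longrightarrow> artin_eq VV E m (w @ winv w) []"
proof (induction w)
  case Nil
  then show ?case by (simp add: artin_eq.refl)
next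
  case (Cons x w)
  then have "artin_eq VV E m ([x] @ (w @ winv w) @ [flip x]) ([x] @ [] @ [flip x])"
    by (intro artin_eq_context) (auto simp: flip_def)
  moreover have "artin_eq VV E m [x, flip x] []"
    using Cons by (intro artin_eq_cancel_pair) auto
  ultimately show ?case
    by (auto intro: artin_eq.trans)
qed

lemma artin_eq_winv_left: "word_over VV w \<Longrightarrow> artin_eq VV E m (winv w @ w) []"
  using artin_eq_winv_right[where w = "winv w"] by simp

lemma artin_eq_cancel_left:
  assumes "artin_eq VV E m (u @ x) (u @ y)"
  shows "artin_eq VV E m x y"
proof -
  have u: "word_over VV u" and x: "word_over VV x" and y: "word_over VV y"
    using artin_eq_word_over[OF assms] by auto
  have "artin_eq VV E m (winv u @ u @ x) (winv u @ u @ y)"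
    using artin_eq_append_left[OF assms, of "winv u"] u by simp
  moreover have "artin_eq VV E m ((winv u @ u) @ x) x" "artin_eq VV E m ((winv u @ u) @ y) y"
    using artin_eq_append_right[OF artin_eq_winv_left[OF u]] x y by auto
  ultimately show ?thesis
    by (auto intro: artin_eq.sym artin_eq.trans)
qed

lemma artin_eq_cancel_right:
  assumes "artin_eq VV E m (x @ u) (y @ u)"
  shows "artin_eq VV E m x y"
proof -
  have u: "word_over VV u" and x: "word_over VV x" and y: "word_over VV y"
    using artin_eq_word_over[OF assms] by auto
  have "artin_eq VV E m (x @ u @ winv u) (y @ u @ winv u)"
    using artin_eq_append_right[OF assms, of "winv u"] u by simp
  moreover have "artin_eq VV E m (x @ u @ winv u) x" "artin_eq VV E m (y @ u @ winv u) y"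
    using artin_eq_append_left[OF artin_eq_winv_right[OF u]] x y by auto
  ultimately show ?thesis
    by (blast intro: artin_eq.sym artin_eq.trans)
qed

lemma artin_eq_winv:
  assumes "artin_eq VV E m a b"
  shows "artin_eq VV E m (winv a) (winv b)"
proof -
  have a: "word_over VV a" and b: "word_over VV b"
    using artin_eq_word_over[OF assms] by auto
  have "artin_eq VV E m (winv a @ a) (winv b @ b)"
    using artin_eq_winv_left[OF a] artin_eq_winv_left[OF b] by (meson artin_eq.sym artin_eq.trans)
  moreover have "artin_eq VV E m (winv a @ a) (winv a @ b)"
    using artin_eq_append_left[OF assms, of "winv a"] a by simp
  ultimately have "artin_eq VV E m (winv a @ b) (winv b @ b)"
    by (blast intro: artin_eq.sym artin_eq.trans)
  then show ?thesis
    by (rule artin_eq_cancel_right)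
qed

lemma artin_eq_conj_move:
  assumes "artin_eq VV E m h (k @ w @ winv k)" and "word_over VV k"
  shows "artin_eq VV E m (winv k @ h @ k) w"
proof -
  have w: "word_over VV w"
    using artin_eq_word_over[OF assms(1)] by auto
  have "artin_eq VV E m (winv k @ h @ k) (winv k @ (k @ w @ winv k) @ k)"
    using artin_eq_append_left[OF artin_eq_append_right[OF assms], of "winv k"] assms(2) by simp
  moreover have "artin_eq VV E m ((winv k @ k) @ (w @ (winv k @ k))) ([] @ (w @ []))"
    by (intro artin_eq_append artin_eq_winv_left assms(2) artin_eq.refl w)
  ultimately show ?thesis
    by (auto intro: artin_eq.trans)
qed

lemma artin_eq_mono:
  "artin_eq VV E m u w \<Longrightarrow> VV \<subseteq> VV' \<Longrightarrow> (\<And>a b. a \<in> VV \<Longrightarrow> b \<in> VV \<Longrightarrow> E a b \<Longrightarrow> E' a b) \<Longrightarrow>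
    artin_eq VV' E' m u w"
proof (induction rule: artin_eq.induct)
  case (refl w)
  then show ?case by (intro artin_eq.refl) auto
next
  case (sym u w)
  then show ?case by (blast intro: artin_eq.sym)
next
  case (trans u v w)
  then show ?case by (blast intro: artin_eq.trans)
next
  case (red u w x)
  then show ?case by (intro artin_eq.red) auto
next
  case (braid u w a b)
  then show ?case by (intro artin_eq.braid) auto
qed

definition exp_sum :: "'v word \<Rightarrow> int" where
  "exp_sum w = sum_list (map (\<lambda>x. if snd x then 1 else -1) w)"

lemma exp_sum_Nil [simp]: "exp_sum [] = 0"
  by (simp add: exp_sum_def)

lemma exp_sum_Cons [simp]: "exp_sum (x # w) = (if snd x then 1 else -1) + exp_sum w"
  by (simp add: exp_sum_def)

lemma exp_sum_append [simp]: "exp_sum (u @ w) = exp_sum u + exp_sum w"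
  by (simp add: exp_sum_def)

lemma exp_sum_winv [simp]: "exp_sum (winv w) = - exp_sum w"
  by (induction w) (auto simp: flip_def)

lemma exp_sum_alt_prod: "exp_sum (alt_prod a b n) = int n"
  by (induction n) (auto simp: exp_sum_def alt_prod_def)

lemma artin_eq_exp_sum: "artin_eq VV E m u w \<Longrightarrow> exp_sum u = exp_sum w"
  by (induction rule: artin_eq.induct) (auto simp: exp_sum_alt_prod flip_def)

section \<open>The Tits representation\<close>

definition tits_form :: "('v \<Rightarrow> 'v \<Rightarrow> bool) \<Rightarrow> ('v \<Rightarrow> 'v \<Rightarrow> nat) \<Rightarrow> 'v \<Rightarrow> 'v \<Rightarrow> real" where
  "tits_form E m a b = (if a = b then 1 else if E a b then - cos (pi / real (m a b)) else 0)"

text \<open>The Tits representation in its dual form on functions \<open>V \<Rightarrow> real\<close>: both \<open>c\<close> and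
  \<open>c\<^sup>-\<^sup>1\<close> act by the reflection \<open>\<sigma>\<^sub>c\<close>.\<close>

definition tits_refl :: "('v \<Rightarrow> 'v \<Rightarrow> bool) \<Rightarrow> ('v \<Rightarrow> 'v \<Rightarrow> nat) \<Rightarrow> 'v \<Rightarrow> ('v \<Rightarrow> real) \<Rightarrow> 'v \<Rightarrow> real" where
  "tits_refl E m c f = (\<lambda>d. f d - 2 * tits_form E m c d * f c)"

definition tits_act :: "('v \<Rightarrow> 'v \<Rightarrow> bool) \<Rightarrow> ('v \<Rightarrow> 'v \<Rightarrow> nat) \<Rightarrow> 'v word \<Rightarrow> ('v \<Rightarrow> real) \<Rightarrow> 'v \<Rightarrow> real" where
  "tits_act E m w f = foldr (\<lambda>x. tits_refl E m (fst x)) w f"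

lemma tits_act_Nil [simp]: "tits_act E m [] f = f"
  by (simp add: tits_act_def)

lemma tits_act_Cons [simp]: "tits_act E m (x # w) f = tits_refl E m (fst x) (tits_act E m w f)"
  by (simp add: tits_act_def)

lemma tits_act_append: "tits_act E m (u @ w) f = tits_act E m u (tits_act E m w f)"
  by (simp add: tits_act_def)

lemma tits_refl_tits_refl [simp]: "tits_refl E m c (tits_refl E m c f) = f"
  by (rule ext) (simp add: tits_refl_def tits_form_def)

lemma tits_act_two_letters:
  assumes "fst ` set w \<subseteq> {s, t}"
  shows "\<exists>x\<^sub>s x\<^sub>t. \<forall>d. tits_act E m w f d = f d - 2 * tits_form E m s d * x\<^sub>s - 2 * tits_form E m t d * x\<^sub>t"
  using assms
proof (induction w)
  case Nil
  have "\<forall>d. tits_act E m [] f d = f d - 2 * tits_form E m s d * 0 - 2 * tits_form E m t d * 0"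
    by simp
  then show ?case by blast
next
  case (Cons x w)
  define g where "g = tits_act E m w f"
  obtain x\<^sub>s x\<^sub>t where g: "\<And>d. g d = f d - 2 * tits_form E m s d * x\<^sub>s - 2 * tits_form E m t d * x\<^sub>t"
    using Cons by (auto simp: g_def)
  have "fst x = s \<or> fst x = t"
    using Cons.prems by auto
  then show ?case
  proof
    assume "fst x = s"
    then have "\<forall>d. tits_act E m (x # w) f d
        = f d - 2 * tits_form E m s d * (x\<^sub>s + g s) - 2 * tits_form E m t d * x\<^sub>t"
      by (simp add: g_def[symmetric] tits_refl_def g algebra_simps)
    then show ?case by blast
  next
    assume "fst x = t"
    then have "\<forall>d. tits_act E m (x # w) f d
        = f d - 2 * tits_form E m s d * x\<^sub>s - 2 * tits_form E m t d * (x\<^sub>t + g t)"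
      by (simp add: g_def[symmetric] tits_refl_def g algebra_simps)
    then show ?case by blast
  qed
qed

context
  fixes E :: "'v \<Rightarrow> 'v \<Rightarrow> bool" and m :: "'v \<Rightarrow> 'v \<Rightarrow> nat" and s t :: 'v and \<theta> :: real
  assumes s_neq_t: "s \<noteq> t" and edge_st: "E s t" "E t s" and m_sym: "m s t = m t s"
    and m_ge_2: "2 \<le> m s t" and \<theta>_def: "\<theta> = pi / real (m s t)"
begin

lemma tits_form_st: "tits_form E m s t = - cos \<theta>" "tits_form E m t s = - cos \<theta>"
  using s_neq_t edge_st m_sym \<theta>_def by (auto simp: tits_form_def)

lemma tits_form_diag: "tits_form E m s s = 1" "tits_form E m t t = 1"
  by (auto simp: tits_form_def)

lemma \<theta>_bounds: "0 < \<theta>" "\<theta> < pi" "\<theta> * real (m s t) = pi"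
  using m_ge_2 by (auto simp: \<theta>_def divide_less_eq)

lemma sin_\<theta>_pos: "0 < sin \<theta>"
  using \<theta>_bounds by (intro sin_gt_zero) auto

text \<open>In these polar coordinates \<open>s\<close> and \<open>t\<close> act by \<open>p \<mapsto> -p\<close> and \<open>p \<mapsto> -2\<theta> - p\<close>, so an
  alternating word of length \<open>m\<close> shifts the phase by \<open>2m\<theta> = 2\<pi>\<close>.\<close>

definition dihedral_phase :: "real \<Rightarrow> real \<Rightarrow> ('v \<Rightarrow> real) \<Rightarrow> bool" where
  "dihedral_phase r p f \<longleftrightarrow> f s = r * sin p \<and> f t = - r * sin (p + \<theta>)"

lemma dihedral_phase_refl_s:
  assumes "dihedral_phase r p f"
  shows "dihedral_phase r (- p) (tits_refl E m s f)"
proof -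
  have "tits_refl E m s f t = r * (2 * cos \<theta> * sin p - sin (p + \<theta>))"
    using assms by (simp add: dihedral_phase_def tits_refl_def tits_form_st algebra_simps)
  also have "\<dots> = - r * sin (- p + \<theta>)"
    using sin_add[of p \<theta>] sin_add[of "- p" \<theta>] sin_minus[of p] cos_minus[of p] by algebra
  finally show ?thesis
    using assms by (simp add: dihedral_phase_def tits_refl_def tits_form_diag)
qed

lemma dihedral_phase_refl_t:
  assumes "dihedral_phase r p f"
  shows "dihedral_phase r (- 2 * \<theta> - p) (tits_refl E m t f)"
proof -
  have fs: "f s = r * sin p" and ft: "f t = - r * sin (p + \<theta>)"
    using assms by (auto simp: dihedral_phase_def)
  have "sin (p + 2 * \<theta>) = sin (p + \<theta>) * cos \<theta> + cos (p + \<theta>) * sin \<theta>"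
    using sin_add[of "p + \<theta>" \<theta>] by (simp add: algebra_simps)
  moreover have "sin p = sin (p + \<theta>) * cos \<theta> - cos (p + \<theta>) * sin \<theta>"
    using sin_diff[of "p + \<theta>" \<theta>] by simp
  ultimately have sum_to_product: "sin p - 2 * cos \<theta> * sin (p + \<theta>) = - sin (p + 2 * \<theta>)"
    by (simp add: algebra_simps)
  have "- 2 * \<theta> - p = - (p + 2 * \<theta>)" and "- 2 * \<theta> - p + \<theta> = - (p + \<theta>)"
    by simp_all
  then have phases: "sin (- 2 * \<theta> - p) = - sin (p + 2 * \<theta>)" "sin (- 2 * \<theta> - p + \<theta>) = - sin (p + \<theta>)"
    by (simp_all only: sin_minus)
  have "tits_refl E m t f s = r * (sin p - 2 * cos \<theta> * sin (p + \<theta>))"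
    by (simp add: tits_refl_def tits_form_st fs ft algebra_simps)
  also have "\<dots> = r * sin (- 2 * \<theta> - p)"
    unfolding sum_to_product phases by simp
  finally have "tits_refl E m t f s = r * sin (- 2 * \<theta> - p)" .
  moreover have "tits_refl E m t f t = - r * sin (- 2 * \<theta> - p + \<theta>)"
    unfolding phases by (simp add: tits_refl_def tits_form_diag ft)
  ultimately show ?thesis
    by (simp add: dihedral_phase_def)
qed

lemma dihedral_phase_alt_prod:
  assumes "dihedral_phase r p f"
  shows "\<exists>q. dihedral_phase r (q + 2 * real n * \<theta>) (tits_act E m (alt_prod s t n) f) \<and>
    dihedral_phase r q (tits_act E m (alt_prod t s n) f)"
proof (induction n)
  case 0
  then show ?case using assms by (auto simp: alt_prod_def)
next
  case (Suc n)
  then obtain q where st: "dihedral_phase r (q + 2 * real n * \<theta>) (tits_act E m (alt_prod s t n) f)"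
    and ts: "dihedral_phase r q (tits_act E m (alt_prod t s n) f)"
    by auto
  let ?q = "- 2 * \<theta> - (q + 2 * real n * \<theta>)"
  have "dihedral_phase r (- q) (tits_act E m (alt_prod s t (Suc n)) f)"
    using dihedral_phase_refl_s[OF ts] by (simp add: alt_prod_Suc)
  moreover have "- q = ?q + 2 * real (Suc n) * \<theta>"
    by (simp add: algebra_simps)
  moreover have "dihedral_phase r ?q (tits_act E m (alt_prod t s (Suc n)) f)"
    using dihedral_phase_refl_t[OF st] by (simp add: alt_prod_Suc)
  ultimately show ?case
    by metis
qed

lemma tits_act_braid_at_st:
  "tits_act E m (alt_prod s t (m s t)) f s = tits_act E m (alt_prod t s (m s t)) f s \<and>
   tits_act E m (alt_prod s t (m s t)) f t = tits_act E m (alt_prod t s (m s t)) f t"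
proof -
  obtain r p where rp: "- (f t + f s * cos \<theta>) / sin \<theta> = r * cos p" "f s = r * sin p"
    using polar_Ex by blast
  have "- r * sin (p + \<theta>) = - (r * sin p * cos \<theta> + r * cos p * sin \<theta>)"
    by (simp add: sin_add algebra_simps)
  also have "\<dots> = f t"
    unfolding rp(2) rp(1)[symmetric] using sin_\<theta>_pos by (simp add: field_simps)
  finally have "dihedral_phase r p f"
    using rp by (simp add: dihedral_phase_def)
  then obtain q where
    st: "dihedral_phase r (q + 2 * real (m s t) * \<theta>) (tits_act E m (alt_prod s t (m s t)) f)" and
    ts: "dihedral_phase r q (tits_act E m (alt_prod t s (m s t)) f)"
    using dihedral_phase_alt_prod by blast
  have "q + 2 * real (m s t) * \<theta> = q + 2 * pi" "q + 2 * pi + \<theta> = (q + \<theta>) + 2 * pi"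
    using \<theta>_bounds(3) by (simp_all add: algebra_simps)
  with st ts show ?thesis
    unfolding dihedral_phase_def by (simp only: sin_periodic)
qed

lemma tits_act_braid: "tits_act E m (alt_prod s t (m s t)) f = tits_act E m (alt_prod t s (m s t)) f"
proof -
  have "fst ` set (alt_prod s t (m s t)) \<subseteq> {s, t}" "fst ` set (alt_prod t s (m s t)) \<subseteq> {s, t}"
    by (auto simp: alt_prod_def)
  from tits_act_two_letters[OF this(1)] tits_act_two_letters[OF this(2)]
  obtain x\<^sub>s x\<^sub>t y\<^sub>s y\<^sub>t where
    x: "\<forall>d. tits_act E m (alt_prod s t (m s t)) f d
      = f d - 2 * tits_form E m s d * x\<^sub>s - 2 * tits_form E m t d * x\<^sub>t" and
    y: "\<forall>d. tits_act E m (alt_prod t s (m s t)) f d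
      = f d - 2 * tits_form E m s d * y\<^sub>s - 2 * tits_form E m t d * y\<^sub>t"
    by blast
  have "x\<^sub>s - cos \<theta> * x\<^sub>t = y\<^sub>s - cos \<theta> * y\<^sub>t" "x\<^sub>t - cos \<theta> * x\<^sub>s = y\<^sub>t - cos \<theta> * y\<^sub>s"
    using tits_act_braid_at_st[of f] by (simp_all add: x y tits_form_st tits_form_diag)
  then have "(1 - cos \<theta> * cos \<theta>) * (x\<^sub>t - y\<^sub>t) = 0"
    by algebra
  moreover have "cos \<theta> * cos \<theta> < 1"
  proof -
    have "0 < sin \<theta> * sin \<theta>"
      using sin_\<theta>_pos by simp
    moreover have "sin \<theta> * sin \<theta> + cos \<theta> * cos \<theta> = 1"
      using sin_cos_squared_add[of \<theta>] by (simp add: power2_eq_square)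
    ultimately show ?thesis
      by linarith
  qed
  ultimately have "x\<^sub>t = y\<^sub>t"
    by simp
  then have "x\<^sub>s = y\<^sub>s"
    using \<open>x\<^sub>s - cos \<theta> * x\<^sub>t = y\<^sub>s - cos \<theta> * y\<^sub>t\<close> by simp
  then show ?thesis
    using \<open>x\<^sub>t = y\<^sub>t\<close> by (intro ext) (simp add: x y)
qed

end

lemma artin_eq_tits_act:
  assumes "labelled_simplicial_graph VV E m"
  shows "artin_eq VV E m u w \<Longrightarrow> tits_act E m u = tits_act E m w"
proof (induction rule: artin_eq.induct)
  case (red u w x)
  show ?case
    by (rule ext) (simp add: tits_act_append)
next
  case (braid u w a b)
  then have "a \<noteq> b" "E b a" "m a b = m b a" "2 \<le> m a b"
    using assms by (auto simp: labelled_simplicial_graph_def)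
  then have "tits_act E m (alt_prod a b (m a b)) = tits_act E m (alt_prod b a (m a b))"
    using tits_act_braid[of a b E m] braid by blast
  then show ?case
    by (intro ext) (simp add: tits_act_append)
qed simp_all

lemma artin_generators_distinct:
  assumes "labelled_simplicial_graph VV E m" and "a \<noteq> b"
  shows "\<not> artin_eq VV E m [(a, True)] [(b, True)]"
proof
  assume "artin_eq VV E m [(a, True)] [(b, True)]"
  then have "tits_act E m [(a, True)] (\<lambda>d. if d = a then 1 else 0) a
      = tits_act E m [(b, True)] (\<lambda>d. if d = a then 1 else 0) a"
    using artin_eq_tits_act[OF assms(1)] by metis
  then show False
    using assms(2) by (simp add: tits_refl_def tits_form_def)
qed

section \<open>Induced subgraphs and cut vertices\<close>

abbreviation edge_rel :: "('v \<Rightarrow> 'v \<Rightarrow> bool) \<Rightarrow> 'v set \<Rightarrow> ('v \<times> 'v) set" where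
  "edge_rel E S \<equiv> {(a, b). a \<in> S \<and> b \<in> S \<and> E a b}"

definition induced_edges :: "('v \<Rightarrow> 'v \<Rightarrow> bool) \<Rightarrow> 'v set \<Rightarrow> 'v \<Rightarrow> 'v \<Rightarrow> bool" where
  "induced_edges E X a b \<longleftrightarrow> E a b \<and> a \<in> X \<and> b \<in> X"

lemma labelled_simplicial_graph_induced:
  "labelled_simplicial_graph VV E m \<Longrightarrow> labelled_simplicial_graph X (induced_edges E X) m"
  unfolding labelled_simplicial_graph_def induced_edges_def by auto

lemma connected_on_induced: "S \<subseteq> X \<Longrightarrow> connected_on (induced_edges E X) S \<longleftrightarrow> connected_on E S"
proof -
  assume "S \<subseteq> X"
  then have "edge_rel (induced_edges E X) S = edge_rel E S"
    by (auto simp: induced_edges_def)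
  then show ?thesis
    by (simp add: connected_on_def)
qed

lemma chunk_induced:
  assumes "X \<subseteq> VV"
  shows "chunk X (induced_edges E X) S \<longleftrightarrow> S \<subseteq> X \<and> chunk VV E S"
proof (cases "S \<subseteq> X")
  case True
  then have "\<And>u. connected_on (induced_edges E X) (S - {u}) \<longleftrightarrow> connected_on E (S - {u})"
    by (intro connected_on_induced) auto
  then show ?thesis
    using True assms connected_on_induced[OF True]
    by (auto simp: chunk_def separating_vertex_def)
qed (simp add: chunk_def)

lemma big_chunk_induced:
  assumes "X \<subseteq> VV" and "big_chunk VV E L" and "L \<subseteq> X"
  shows "big_chunk X (induced_edges E X) L"
  using assms by (auto simp: big_chunk_def chunk_induced)

lemma chunk_obtain_two_vertices:
  assumes "chunk VV E S"
  obtains a b where "a \<in> S" "b \<in> S" "a \<noteq> b"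
proof -
  obtain a where a: "a \<in> S"
    using assms by (auto simp: chunk_def connected_on_def)
  then have "S - {a} \<noteq> {}"
    using assms by (auto simp: chunk_def separating_vertex_def connected_on_def)
  then show ?thesis
    using a that by blast
qed

lemma connected_on_if_closed_off_vertex:
  assumes sym: "\<And>a b. E a b \<Longrightarrow> E b a" and conn: "connected_on E VV"
    and T: "v \<in> T" "T \<subseteq> VV"
    and closed: "\<And>a b. a \<in> T - {v} \<Longrightarrow> b \<in> VV \<Longrightarrow> E a b \<Longrightarrow> b \<in> T"
  shows "connected_on E T"
proof -
  have to_v: "(p, v) \<in> (edge_rel E T)\<^sup>*" if "p \<in> T" for p
  proof -
    have "(p, v) \<in> (edge_rel E VV)\<^sup>*"
      using conn that T unfolding connected_on_def by (meson subsetD)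
    then show ?thesis
      using that
    proof (induction rule: converse_rtrancl_induct)
      case (step p p')
      show ?case
      proof (cases "p = v")
        case False
        have "E p p'" "p' \<in> VV"
          using step.hyps(1) by auto
        then have "p' \<in> T"
          using closed[of p p'] False step.prems by blast
        then have "(p', v) \<in> (edge_rel E T)\<^sup>*" and "(p, p') \<in> edge_rel E T"
          using step.IH step.prems \<open>E p p'\<close> by auto
        then show ?thesis
          by (rule converse_rtrancl_into_rtrancl[rotated])
      qed simp
    qed simp
  qed
  have "sym ((edge_rel E T)\<^sup>*)"
    by (intro sym_rtrancl) (auto intro: symI sym)
  then show ?thesis
    using to_v T(1) by (auto simp: connected_on_def intro: rtrancl_trans dest: symD)
qed

locale cut_vertex_split =
  fixes VV :: "'v set" and E :: "'v \<Rightarrow> 'v \<Rightarrow> bool" and X Y :: "'v set" and v :: 'v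
  assumes union: "X \<union> Y = VV" and inter: "X \<inter> Y = {v}"
    and edge_side: "\<And>a b. E a b \<Longrightarrow> a \<in> VV \<Longrightarrow> b \<in> VV \<Longrightarrow> (a \<in> X \<and> b \<in> X) \<or> (a \<in> Y \<and> b \<in> Y)"
begin

lemma swap: "cut_vertex_split VV E Y X v"
  using union inter edge_side by unfold_locales blast+

lemma edge_path_stays_in_X:
  assumes "(q, p) \<in> (edge_rel E T)\<^sup>*" and "T \<subseteq> VV" and "v \<notin> T" and "q \<in> X"
  shows "p \<in> X"
  using assms(1,4)
proof (induction rule: rtrancl_induct)
  case (step p p')
  then have "p \<noteq> v" "p \<in> VV" "p' \<in> VV" "E p p'"
    using assms(2,3) by auto
  moreover have "p \<in> X"
    using step.IH step.prems by simp
  then have "p \<notin> Y"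
    using inter \<open>p \<noteq> v\<close> by (metis IntI singletonD)
  ultimately show ?case
    using edge_side[of p p'] by blast
qed

lemma connected_subset_side:
  assumes "connected_on E T" and "T \<subseteq> VV" and "v \<notin> T"
  shows "T \<subseteq> X \<or> T \<subseteq> Y"
proof -
  obtain q where q: "q \<in> T" and paths: "\<And>p. p \<in> T \<Longrightarrow> (q, p) \<in> (edge_rel E T)\<^sup>*"
    using assms(1) by (auto simp: connected_on_def)
  have "q \<in> X \<or> q \<in> Y"
    using q assms(2) union by auto
  then show ?thesis
  proof
    assume "q \<in> X"
    then show ?thesis
      using edge_path_stays_in_X[OF paths assms(2,3)] by blast
  next
    assume "q \<in> Y"
    then show ?thesis
      using cut_vertex_split.edge_path_stays_in_X[OF swap paths assms(2,3)] by blast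
  qed
qed

lemma chunk_subset_side:
  assumes "chunk VV E S"
  shows "S \<subseteq> X \<or> S \<subseteq> Y"
proof -
  have "connected_on E (S - {v})"
    using assms by (cases "v \<in> S") (auto simp: chunk_def separating_vertex_def)
  then have "S - {v} \<subseteq> X \<or> S - {v} \<subseteq> Y"
    using assms by (intro connected_subset_side) (auto simp: chunk_def)
  then show ?thesis
    using inter by blast
qed

end

lemma separating_vertex_split:
  assumes sym: "\<And>a b. E a b \<Longrightarrow> E b a" and conn: "connected_on E VV"
    and sep: "separating_vertex E VV v" and nontrivial: "VV - {v} \<noteq> {}"
  obtains X Y where "cut_vertex_split VV E X Y v" "X \<noteq> VV" "Y \<noteq> VV"
    "connected_on E X" "connected_on E Y"
proof -
  let ?R = "edge_rel E (VV - {v})"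
  have v: "v \<in> VV"
    using sep by (simp add: separating_vertex_def)
  obtain x y where x: "x \<in> VV - {v}" and y: "y \<in> VV - {v}" and xy: "(x, y) \<notin> ?R\<^sup>*"
    using sep nontrivial by (auto simp: separating_vertex_def connected_on_def)
  define C where "C = {z. (x, z) \<in> ?R\<^sup>*}"
  have C_sub: "C \<subseteq> VV - {v}"
  proof
    fix z
    assume "z \<in> C"
    then have "(x, z) \<in> ?R\<^sup>*"
      by (simp add: C_def)
    then show "z \<in> VV - {v}"
      using x by (induction rule: rtrancl_induct) auto
  qed
  have C_closed: "b \<in> C" if "a \<in> C" "b \<in> VV - {v}" "E a b" for a b
    using that C_sub unfolding C_def by (auto intro: rtrancl_into_rtrancl)
  have "x \<in> C" "y \<notin> C"
    using xy by (simp_all add: C_def)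
  define X where "X = insert v C"
  define Y where "Y = VV - C"
  have split: "cut_vertex_split VV E X Y v"
  proof
    show "X \<union> Y = VV" "X \<inter> Y = {v}"
      using C_sub v by (auto simp: X_def Y_def)
    show "(a \<in> X \<and> b \<in> X) \<or> (a \<in> Y \<and> b \<in> Y)" if "E a b" "a \<in> VV" "b \<in> VV" for a b
      using that C_closed[of a b] C_closed[of b a] sym by (auto simp: X_def Y_def)
  qed
  have "connected_on E X"
    using C_sub v C_closed by (intro connected_on_if_closed_off_vertex[OF sym conn]) (auto simp: X_def)
  moreover have "connected_on E Y"
    using v C_sub C_closed sym by (intro connected_on_if_closed_off_vertex[OF sym conn]) (auto simp: Y_def)
  moreover have "X \<noteq> VV" "Y \<noteq> VV"
    using x y \<open>x \<in> C\<close> \<open>y \<notin> C\<close> by (auto simp: X_def Y_def)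
  ultimately show ?thesis
    using split that by blast
qed

section \<open>The amalgamated product at a cut vertex\<close>

locale artin_amalgam = cut_vertex_split VV E X Y v
  for VV :: "'v set" and E X Y v +
  fixes m :: "'v \<Rightarrow> 'v \<Rightarrow> nat"
begin

definition side :: "bool \<Rightarrow> 'v set" where
  "side z = (if z then X else Y)"

abbreviation factor_eq :: "bool \<Rightarrow> 'v word \<Rightarrow> 'v word \<Rightarrow> bool" where
  "factor_eq z \<equiv> artin_eq (side z) (induced_edges E (side z)) m"

abbreviation ambient_eq :: "'v word \<Rightarrow> 'v word \<Rightarrow> bool" where
  "ambient_eq \<equiv> artin_eq VV E m"

abbreviation on_side :: "bool \<Rightarrow> 'v word \<Rightarrow> bool" where
  "on_side z w \<equiv> word_over (side z) w"

lemma v_in_side: "v \<in> side z"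
  using inter by (auto simp: side_def)

lemma side_subset: "side z \<subseteq> VV"
  using union by (auto simp: side_def)

lemma on_side_word_over: "on_side z w \<Longrightarrow> word_over VV w"
  using side_subset by blast

lemma factor_eq_imp_ambient_eq: "factor_eq z u w \<Longrightarrow> ambient_eq u w"
  by (erule artin_eq_mono) (auto simp: induced_edges_def side_subset[THEN subsetD] side_subset)

lemma letter_on_side: "fst x \<in> VV \<Longrightarrow> on_side (fst x \<in> X) [x]"
  using union by (cases x) (auto simp: side_def)

definition v_pow :: "int \<Rightarrow> 'v word" where
  "v_pow n = (if 0 \<le> n then replicate (nat n) (v, True) else replicate (nat (- n)) (v, False))"

lemma on_side_v_pow: "on_side z (v_pow n)"
  using v_in_side by (auto simp: v_pow_def)

lemma v_pow_0 [simp]: "v_pow 0 = []"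
  by (simp add: v_pow_def)

lemma exp_sum_v_pow: "exp_sum (v_pow n) = n"
proof -
  have "exp_sum (replicate k (v, b)) = (if b then int k else - int k)" for k b
    by (induction k) auto
  then show ?thesis
    by (auto simp: v_pow_def)
qed

lemma winv_v_pow: "winv (v_pow n) = v_pow (- n)"
  by (auto simp: v_pow_def winv_def flip_def)

lemma v_pow_succ: "factor_eq z (v_pow (n + 1)) ((v, True) # v_pow n)"
proof (cases "0 \<le> n")
  case True
  then have "v_pow (n + 1) = (v, True) # v_pow n"
    by (simp add: v_pow_def nat_add_distrib)
  then show ?thesis
    using on_side_v_pow[where z = z and n = "n + 1"] by (simp add: artin_eq.refl)
next
  case False
  then obtain k where k: "nat (- n) = Suc k"
    by (cases "nat (- n)") auto
  then have "v_pow n = (v, False) # replicate k (v, False)" "v_pow (n + 1) = replicate k (v, False)"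
    using False by (auto simp: v_pow_def)
  moreover have "factor_eq z ([] @ [(v, True), flip (v, True)] @ replicate k (v, False)) ([] @ replicate k (v, False))"
    using v_in_side by (intro artin_eq.red) auto
  ultimately show ?thesis
    by (simp add: flip_def artin_eq.sym)
qed

lemma v_pow_pred: "factor_eq z (v_pow (n - 1)) ((v, False) # v_pow n)"
proof (cases "0 < n")
  case True
  then obtain k where k: "nat n = Suc k"
    by (cases "nat n") auto
  then have "v_pow n = (v, True) # replicate k (v, True)" "v_pow (n - 1) = replicate k (v, True)"
    using True by (auto simp: v_pow_def)
  moreover have "factor_eq z ([] @ [(v, False), flip (v, False)] @ replicate k (v, True)) ([] @ replicate k (v, True))"
    using v_in_side by (intro artin_eq.red) auto
  ultimately show ?thesis
    by (simp add: flip_def artin_eq.sym)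
next
  case False
  then have "nat (1 - n) = Suc (nat (- n))"
    by simp
  then have "v_pow (n - 1) = (v, False) # v_pow n"
    using False by (simp add: v_pow_def)
  then show ?thesis
    using on_side_v_pow[where z = z and n = "n - 1"] by (simp add: artin_eq.refl)
qed

lemma v_pow_add: "factor_eq z (v_pow a @ v_pow b) (v_pow (a + b))"
proof (induction a rule: int_induct[of _ 0])
  case base
  then show ?case using on_side_v_pow by (simp add: artin_eq.refl)
next
  case (step1 i)
  have "factor_eq z (v_pow (i + 1) @ v_pow b) ([(v, True)] @ v_pow i @ v_pow b)"
    using artin_eq_append_right[OF v_pow_succ on_side_v_pow] by simp
  moreover have "factor_eq z ([(v, True)] @ v_pow i @ v_pow b) ([(v, True)] @ v_pow (i + b))"
    using step1.IH v_in_side by (intro artin_eq_append_left) auto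
  moreover have "factor_eq z ([(v, True)] @ v_pow (i + b)) (v_pow (i + 1 + b))"
    using v_pow_succ[of z "i + b"] by (simp add: artin_eq.sym algebra_simps)
  ultimately show ?case
    by (blast intro: artin_eq.trans)
next
  case (step2 i)
  have "factor_eq z (v_pow (i - 1) @ v_pow b) ([(v, False)] @ v_pow i @ v_pow b)"
    using artin_eq_append_right[OF v_pow_pred on_side_v_pow] by simp
  moreover have "factor_eq z ([(v, False)] @ v_pow i @ v_pow b) ([(v, False)] @ v_pow (i + b))"
    using step2.IH v_in_side by (intro artin_eq_append_left) auto
  moreover have "factor_eq z ([(v, False)] @ v_pow (i + b)) (v_pow (i - 1 + b))"
    using v_pow_pred[of z "i + b"] by (simp add: artin_eq.sym algebra_simps)
  ultimately show ?case
    by (blast intro: artin_eq.trans)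
qed

lemma v_pow_inj: "artin_eq S F m (v_pow a) (v_pow b) \<Longrightarrow> a = b"
  using artin_eq_exp_sum exp_sum_v_pow by metis

definition same_vcoset :: "bool \<Rightarrow> 'v word \<Rightarrow> 'v word \<Rightarrow> bool" where
  "same_vcoset z g g' \<longleftrightarrow> on_side z g \<and> on_side z g' \<and> (\<exists>n. factor_eq z g (v_pow n @ g'))"

lemma same_vcoset_refl: "on_side z g \<Longrightarrow> same_vcoset z g g"
  unfolding same_vcoset_def by (metis append_Nil artin_eq.refl v_pow_0)

lemma same_vcoset_sym:
  assumes "same_vcoset z g g'"
  shows "same_vcoset z g' g"
proof -
  obtain n where n: "factor_eq z g (v_pow n @ g')" and g: "on_side z g" "on_side z g'"
    using assms by (auto simp: same_vcoset_def)
  have "factor_eq z (v_pow (- n) @ g) (v_pow (- n) @ v_pow n @ g')"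
    using artin_eq_append_left[OF n on_side_v_pow] .
  moreover have "factor_eq z ((v_pow (- n) @ v_pow n) @ g') (v_pow (- n + n) @ g')"
    using artin_eq_append_right[OF v_pow_add g(2)] .
  ultimately have "factor_eq z g' (v_pow (- n) @ g)"
    by (auto intro: artin_eq.sym artin_eq.trans)
  then show ?thesis
    using g by (auto simp: same_vcoset_def)
qed

lemma same_vcoset_trans:
  assumes "same_vcoset z g g'" and "same_vcoset z g' g''"
  shows "same_vcoset z g g''"
proof -
  obtain n n' where n: "factor_eq z g (v_pow n @ g')" and n': "factor_eq z g' (v_pow n' @ g'')"
    and g: "on_side z g" "on_side z g''"
    using assms by (auto simp: same_vcoset_def)
  have "factor_eq z (v_pow n @ g') (v_pow n @ v_pow n' @ g'')"
    using artin_eq_append_left[OF n' on_side_v_pow] .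
  moreover have "factor_eq z ((v_pow n @ v_pow n') @ g'') (v_pow (n + n') @ g'')"
    using artin_eq_append_right[OF v_pow_add g(2)] .
  ultimately have "factor_eq z g (v_pow (n + n') @ g'')"
    using n by (auto intro: artin_eq.trans)
  then show ?thesis
    using g by (auto simp: same_vcoset_def)
qed

lemma factor_eq_imp_same_vcoset: "factor_eq z g g' \<Longrightarrow> same_vcoset z g g'"
  unfolding same_vcoset_def by (metis append_Nil artin_eq_word_over v_pow_0)

lemma same_vcoset_v_pow_left: "on_side z g \<Longrightarrow> same_vcoset z (v_pow n @ g) g"
  unfolding same_vcoset_def using on_side_v_pow[where z = z and n = n]
  by (metis artin_eq.refl le_supI set_append)

lemma same_vcoset_Nil_iff: "same_vcoset z g [] \<longleftrightarrow> on_side z g \<and> (\<exists>n. factor_eq z g (v_pow n))"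
  by (simp add: same_vcoset_def)

text \<open>The trivial coset gets the empty representative, so that a product falling into
  \<open>\<langle>v\<rangle>\<close> leaves no syllable in a normal form.\<close>

definition coset_rep :: "bool \<Rightarrow> 'v word \<Rightarrow> 'v word" where
  "coset_rep z g = (SOME g'. same_vcoset z g g' \<and> (same_vcoset z g [] \<longrightarrow> g' = []))"

definition coset_exp :: "bool \<Rightarrow> 'v word \<Rightarrow> int" where
  "coset_exp z g = (THE n. factor_eq z g (v_pow n @ coset_rep z g))"

lemma coset_rep:
  assumes "on_side z g"
  shows "same_vcoset z g (coset_rep z g)" and "same_vcoset z g [] \<Longrightarrow> coset_rep z g = []"
proof -
  have "\<exists>g'. same_vcoset z g g' \<and> (same_vcoset z g [] \<longrightarrow> g' = [])"
    using same_vcoset_refl[OF assms] by blast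
  then have "same_vcoset z g (coset_rep z g) \<and> (same_vcoset z g [] \<longrightarrow> coset_rep z g = [])"
    unfolding coset_rep_def by (rule someI_ex)
  then show "same_vcoset z g (coset_rep z g)" and "same_vcoset z g [] \<Longrightarrow> coset_rep z g = []"
    by blast+
qed

lemma coset_rep_cong: "same_vcoset z g g' \<Longrightarrow> coset_rep z g = coset_rep z g'"
proof -
  assume "same_vcoset z g g'"
  then have "same_vcoset z g h \<longleftrightarrow> same_vcoset z g' h" for h
    using same_vcoset_sym same_vcoset_trans by blast
  then show ?thesis
    by (simp add: coset_rep_def)
qed

lemma on_side_coset_rep: "on_side z g \<Longrightarrow> on_side z (coset_rep z g)"
  using coset_rep(1) by (auto simp: same_vcoset_def)

lemma coset_rep_idem: "on_side z g \<Longrightarrow> coset_rep z (coset_rep z g) = coset_rep z g"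
  using coset_rep(1) coset_rep_cong by (metis same_vcoset_sym)

lemma coset_rep_eq_Nil_iff: "on_side z g \<Longrightarrow> coset_rep z g = [] \<longleftrightarrow> same_vcoset z g []"
  using coset_rep by metis

lemma coset_exp_unique:
  assumes "factor_eq z g (v_pow n @ coset_rep z g)" and "factor_eq z g (v_pow n' @ coset_rep z g)"
  shows "n = n'"
proof -
  have "factor_eq z (v_pow n @ coset_rep z g) (v_pow n' @ coset_rep z g)"
    using assms by (blast intro: artin_eq.sym artin_eq.trans)
  then show ?thesis
    using artin_eq_cancel_right v_pow_inj by metis
qed

lemma factor_eq_coset_decomp:
  assumes "on_side z g"
  shows "factor_eq z g (v_pow (coset_exp z g) @ coset_rep z g)"
proof -
  obtain n where n: "factor_eq z g (v_pow n @ coset_rep z g)"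
    using coset_rep(1)[OF assms] by (auto simp: same_vcoset_def)
  then have "coset_exp z g = n"
    unfolding coset_exp_def using coset_exp_unique by blast
  then show ?thesis
    using n by simp
qed

lemma coset_exp_eqI: "factor_eq z g (v_pow n @ coset_rep z g) \<Longrightarrow> coset_exp z g = n"
  using coset_exp_unique factor_eq_coset_decomp artin_eq_word_over by metis

lemma factor_eq_coset_rep_coset_exp:
  assumes "factor_eq z g g'"
  shows "coset_rep z g = coset_rep z g'" and "coset_exp z g = coset_exp z g'"
proof -
  show rep: "coset_rep z g = coset_rep z g'"
    using coset_rep_cong[OF factor_eq_imp_same_vcoset[OF assms]] .
  have "on_side z g'"
    using artin_eq_word_over[OF assms] by simp
  then have "factor_eq z g (v_pow (coset_exp z g') @ coset_rep z g)"
    using assms factor_eq_coset_decomp rep by (auto intro: artin_eq.trans)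
  then show "coset_exp z g = coset_exp z g'"
    by (rule coset_exp_eqI)
qed

text \<open>Van der Waerden's argument: a normal form \<open>(n, [(z\<^sub>1, t\<^sub>1), \<dots>, (z\<^sub>r, t\<^sub>r)])\<close> stands for
  \<open>v\<^sup>n t\<^sub>1 \<cdots> t\<^sub>r\<close>, where each \<open>t\<^sub>i\<close> is a nontrivial coset representative in the factor
  \<open>A\<^bsub>side z\<^sub>i\<^esub>\<close> and consecutive factors differ. Letters act on normal forms; since the action
  respects the Artin relations, normal forms of equal elements coincide.\<close>

definition take_syllable :: "bool \<Rightarrow> (bool \<times> 'v word) list \<Rightarrow> 'v word \<times> (bool \<times> 'v word) list" where
  "take_syllable z L = (case L of [] \<Rightarrow> ([], []) | p # L' \<Rightarrow> if fst p = z then (snd p, L') else ([], L))"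

definition not_headed_by :: "bool \<Rightarrow> (bool \<times> 'v word) list \<Rightarrow> bool" where
  "not_headed_by z L \<longleftrightarrow> L = [] \<or> fst (hd L) \<noteq> z"

definition syllable :: "bool \<Rightarrow> 'v word \<Rightarrow> bool" where
  "syllable z t \<longleftrightarrow> on_side z t \<and> t \<noteq> [] \<and> coset_rep z t = t"

fun reduced :: "(bool \<times> 'v word) list \<Rightarrow> bool" where
  "reduced [] = True"
| "reduced (p # L) \<longleftrightarrow> syllable (fst p) (snd p) \<and> reduced L \<and> not_headed_by (fst p) L"

definition nf_word :: "int \<times> (bool \<times> 'v word) list \<Rightarrow> 'v word" where
  "nf_word w = v_pow (fst w) @ concat (map snd (snd w))"

definition absorb :: "bool \<Rightarrow> 'v word \<Rightarrow> int \<times> (bool \<times> 'v word) list \<Rightarrow> 'v word" where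
  "absorb z g w = g @ v_pow (fst w) @ fst (take_syllable z (snd w))"

definition act_factor :: "bool \<Rightarrow> 'v word \<Rightarrow> int \<times> (bool \<times> 'v word) list \<Rightarrow> int \<times> (bool \<times> 'v word) list" where
  "act_factor z g w =
    (coset_exp z (absorb z g w),
     if coset_rep z (absorb z g w) = [] then snd (take_syllable z (snd w))
     else (z, coset_rep z (absorb z g w)) # snd (take_syllable z (snd w)))"

lemma take_syllable_not_headed_by: "not_headed_by z L \<Longrightarrow> take_syllable z L = ([], L)"
  by (cases L) (auto simp: take_syllable_def not_headed_by_def)

lemma concat_take_syllable:
  "concat (map snd L) = fst (take_syllable z L) @ concat (map snd (snd (take_syllable z L)))"
  by (auto simp: take_syllable_def split: list.splits)

lemma reduced_take_syllable:
  "reduced L \<Longrightarrow> reduced (snd (take_syllable z L)) \<and> not_headed_by z (snd (take_syllable z L))"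
  by (auto simp: take_syllable_def not_headed_by_def split: list.splits)

lemma syllable_take_syllable:
  "reduced L \<Longrightarrow> fst (take_syllable z L) \<noteq> [] \<Longrightarrow>
    syllable z (fst (take_syllable z L)) \<and> L = (z, fst (take_syllable z L)) # snd (take_syllable z L)"
  by (auto simp: take_syllable_def split: list.splits if_splits)

lemma take_syllable_Nil: "reduced L \<Longrightarrow> fst (take_syllable z L) = [] \<Longrightarrow> snd (take_syllable z L) = L"
  by (auto simp: take_syllable_def syllable_def split: list.splits)

lemma on_side_take_syllable: "reduced L \<Longrightarrow> on_side z (fst (take_syllable z L))"
  using syllable_take_syllable[of L z] by (cases "fst (take_syllable z L) = []") (auto simp: syllable_def)

lemma reduced_word_over: "reduced L \<Longrightarrow> word_over VV (concat (map snd L))"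
  by (induction L) (auto simp: syllable_def dest: on_side_word_over)

lemma word_over_nf_word: "reduced (snd w) \<Longrightarrow> word_over VV (nf_word w)"
  unfolding nf_word_def using reduced_word_over on_side_word_over[OF on_side_v_pow] by auto

lemma on_side_absorb: "on_side z g \<Longrightarrow> reduced (snd w) \<Longrightarrow> on_side z (absorb z g w)"
  unfolding absorb_def using on_side_take_syllable on_side_v_pow[where z = z] by auto

lemma reduced_act_factor:
  assumes g: "on_side z g" and w: "reduced (snd w)"
  shows "reduced (snd (act_factor z g w))"
proof -
  have "on_side z (absorb z g w)"
    using on_side_absorb[OF g w] .
  then have "coset_rep z (absorb z g w) \<noteq> [] \<Longrightarrow> syllable z (coset_rep z (absorb z g w))"
    by (simp add: syllable_def on_side_coset_rep coset_rep_idem)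
  then show ?thesis
    using reduced_take_syllable[OF w, of z] by (simp add: act_factor_def)
qed

lemma take_syllable_act_factor:
  assumes "reduced (snd w)"
  shows "take_syllable z (snd (act_factor z g w)) = (coset_rep z (absorb z g w), snd (take_syllable z (snd w)))"
proof (cases "coset_rep z (absorb z g w) = []")
  case True
  then show ?thesis
    using reduced_take_syllable[OF assms, of z] by (simp add: act_factor_def take_syllable_not_headed_by)
next
  case False
  then show ?thesis
    by (simp add: act_factor_def take_syllable_def)
qed

lemma act_factor_append:
  assumes g1: "on_side z g1" and g2: "on_side z g2" and w: "reduced (snd w)"
  shows "act_factor z g1 (act_factor z g2 w) = act_factor z (g1 @ g2) w"
proof -
  let ?h = "absorb z g2 w"
  have "absorb z g1 (act_factor z g2 w) = g1 @ v_pow (coset_exp z ?h) @ coset_rep z ?h"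
    by (simp add: absorb_def[of z g1] take_syllable_act_factor[OF w]) (simp add: act_factor_def)
  moreover have "factor_eq z (g1 @ v_pow (coset_exp z ?h) @ coset_rep z ?h) (g1 @ ?h)"
    using artin_eq_append_left[OF artin_eq.sym[OF factor_eq_coset_decomp[OF on_side_absorb[OF g2 w]]] g1] .
  moreover have "g1 @ ?h = absorb z (g1 @ g2) w"
    by (simp add: absorb_def)
  ultimately have "factor_eq z (absorb z g1 (act_factor z g2 w)) (absorb z (g1 @ g2) w)"
    by simp
  moreover have "snd (take_syllable z (snd (act_factor z g2 w))) = snd (take_syllable z (snd w))"
    by (simp add: take_syllable_act_factor[OF w])
  ultimately show ?thesis
    unfolding act_factor_def[of z g1 "act_factor z g2 w"] act_factor_def[of z "g1 @ g2" w]
    using factor_eq_coset_rep_coset_exp by presburger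
qed

lemma act_factor_cong:
  assumes "factor_eq z g g'" and w: "reduced (snd w)"
  shows "act_factor z g w = act_factor z g' w"
proof -
  have "factor_eq z (absorb z g w) (absorb z g' w)"
    unfolding absorb_def using artin_eq_append_right[OF assms(1)] on_side_take_syllable[OF w]
      on_side_v_pow[where z = z] by auto
  from factor_eq_coset_rep_coset_exp[OF this] show ?thesis
    by (simp add: act_factor_def)
qed

lemma act_factor_Nil:
  assumes w: "reduced (snd w)"
  shows "act_factor z [] w = w"
proof -
  let ?t = "fst (take_syllable z (snd w))"
  have t: "on_side z ?t"
    using on_side_take_syllable[OF w] .
  have rep: "coset_rep z (absorb z [] w) = ?t"
  proof -
    have "coset_rep z (absorb z [] w) = coset_rep z ?t"
      unfolding absorb_def using coset_rep_cong[OF same_vcoset_v_pow_left[OF t]] by simp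
    moreover have "coset_rep z ?t = ?t"
    proof (cases "?t = []")
      case True
      then show ?thesis
        using coset_rep(2)[where z = z and g = "[]"] same_vcoset_refl[where z = z and g = "[]"] by simp
    next
      case False
      then show ?thesis
        using syllable_take_syllable[OF w] by (simp add: syllable_def)
    qed
    ultimately show ?thesis
      by simp
  qed
  moreover have "coset_exp z (absorb z [] w) = fst w"
    using t on_side_v_pow[where z = z and n = "fst w"]
    by (intro coset_exp_eqI, unfold rep) (simp add: absorb_def artin_eq.refl)
  ultimately show ?thesis
    using take_syllable_Nil[OF w] syllable_take_syllable[OF w, of z]
    by (cases w) (auto simp: act_factor_def)
qed

lemma act_factor_v_letter:
  assumes w: "reduced (snd w)"
  shows "act_factor z [(v, b)] w = (fst w + (if b then 1 else -1), snd w)"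
proof -
  let ?n = "fst w + (if b then 1 else -1)"
  have "factor_eq z ([(v, b)] @ v_pow (fst w)) (v_pow ?n)"
    using artin_eq.sym[OF v_pow_succ[of z "fst w"]] artin_eq.sym[OF v_pow_pred[of z "fst w"]]
    by (cases b) simp_all
  then have "factor_eq z (absorb z [(v, b)] w) (absorb z [] (?n, snd w))"
    unfolding absorb_def using artin_eq_append_right on_side_take_syllable[OF w] by fastforce
  then have "act_factor z [(v, b)] w = act_factor z [] (?n, snd w)"
    using factor_eq_coset_rep_coset_exp by (simp add: act_factor_def absorb_def)
  also have "\<dots> = (?n, snd w)"
    using act_factor_Nil[of "(?n, snd w)"] w by simp
  finally show ?thesis .
qed

lemma act_factor_nf_word:
  assumes g: "on_side z g" and w: "reduced (snd w)"
  shows "ambient_eq (g @ nf_word w) (nf_word (act_factor z g w))"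
proof -
  let ?h = "absorb z g w" and ?L = "snd (take_syllable z (snd w))"
  have "g @ nf_word w = ?h @ concat (map snd ?L)"
    unfolding nf_word_def absorb_def using concat_take_syllable[of "snd w" z] by simp
  moreover have "nf_word (act_factor z g w) = (v_pow (coset_exp z ?h) @ coset_rep z ?h) @ concat (map snd ?L)"
    by (auto simp: nf_word_def act_factor_def)
  moreover have "ambient_eq ?h (v_pow (coset_exp z ?h) @ coset_rep z ?h)"
    using factor_eq_imp_ambient_eq[OF factor_eq_coset_decomp[OF on_side_absorb[OF g w]]] .
  ultimately show ?thesis
    using artin_eq_append_right reduced_word_over reduced_take_syllable[OF w] by metis
qed

lemma act_factor_prepends:
  assumes g: "on_side z g" and nontriv: "\<not> same_vcoset z g []"
    and w: "reduced (snd w)" and head: "not_headed_by z (snd w)"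
  obtains n t where "act_factor z g w = (n, (z, t) # snd w)"
proof -
  have absorb: "absorb z g w = g @ v_pow (fst w)"
    by (simp add: absorb_def take_syllable_not_headed_by[OF head])
  have "\<not> same_vcoset z (g @ v_pow (fst w)) []"
  proof
    assume "same_vcoset z (g @ v_pow (fst w)) []"
    then obtain j where "factor_eq z (g @ v_pow (fst w)) (v_pow j)"
      by (auto simp: same_vcoset_def)
    then have "factor_eq z (g @ v_pow (fst w) @ v_pow (- fst w)) (v_pow j @ v_pow (- fst w))"
      using artin_eq_append_right[OF _ on_side_v_pow] by fastforce
    moreover have "factor_eq z (g @ v_pow (fst w) @ v_pow (- fst w)) (g @ v_pow 0)"
      using artin_eq_append_left[OF v_pow_add[where a = "fst w" and b = "- fst w"] g] by simp
    moreover have "factor_eq z (v_pow j @ v_pow (- fst w)) (v_pow (j - fst w))"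
      using v_pow_add[where a = j and b = "- fst w"] by simp
    ultimately have "factor_eq z g (v_pow (j - fst w))"
      by (auto intro: artin_eq.sym artin_eq.trans)
    then show False
      using nontriv g by (auto simp: same_vcoset_def)
  qed
  then have "coset_rep z (absorb z g w) \<noteq> []"
    using coset_rep_eq_Nil_iff on_side_absorb[OF g w] absorb by simp
  then show ?thesis
    using that by (simp add: act_factor_def take_syllable_not_headed_by[OF head])
qed

lemma act_factor_on_trivial:
  "snd (act_factor z g (n, [])) = [] \<or> (\<exists>t. snd (act_factor z g (n, [])) = [(z, t)])"
  by (simp add: act_factor_def take_syllable_def)

definition act_word :: "'v word \<Rightarrow> int \<times> (bool \<times> 'v word) list \<Rightarrow> int \<times> (bool \<times> 'v word) list" where
  "act_word u w = foldr (\<lambda>x. act_factor (fst x \<in> X) [x]) u w"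

lemma act_word_Nil [simp]: "act_word [] w = w"
  by (simp add: act_word_def)

lemma act_word_Cons: "act_word (x # u) w = act_factor (fst x \<in> X) [x] (act_word u w)"
  by (simp add: act_word_def)

lemma act_word_append: "act_word (u @ u') w = act_word u (act_word u' w)"
  by (simp add: act_word_def)

lemma reduced_act_word: "word_over VV u \<Longrightarrow> reduced (snd w) \<Longrightarrow> reduced (snd (act_word u w))"
proof (induction u)
  case (Cons x u)
  then show ?case
    using reduced_act_factor[OF letter_on_side, of x "act_word u w"] by (auto simp: act_word_Cons)
qed simp

lemma act_factor_letter_any_side:
  assumes x: "on_side z [x]" and w: "reduced (snd w)"
  shows "act_factor (fst x \<in> X) [x] w = act_factor z [x] w"
proof (cases "(fst x \<in> X) = z")
  case False
  then have "fst x \<in> X \<inter> Y"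
    using x by (cases z) (auto simp: side_def)
  then obtain b where "x = (v, b)"
    using inter by (cases x) auto
  then show ?thesis
    using act_factor_v_letter[OF w] by simp
qed simp

lemma act_word_on_side: "on_side z g \<Longrightarrow> reduced (snd w) \<Longrightarrow> act_word g w = act_factor z g w"
proof (induction g)
  case Nil
  then show ?case by (simp add: act_factor_Nil)
next
  case (Cons x g)
  then have "on_side z g" "on_side z [x]"
    by auto
  then have "act_word (x # g) w = act_factor z [x] (act_factor z g w)"
    using Cons act_factor_letter_any_side reduced_act_factor by (simp add: act_word_Cons)
  also have "\<dots> = act_factor z (x # g) w"
    using act_factor_append[OF \<open>on_side z [x]\<close> \<open>on_side z g\<close> Cons.prems(2)] by simp
  finally show ?case .
qed

lemma act_word_artin_eq:
  assumes "ambient_eq u u'" and "reduced (snd w)"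
  shows "act_word u w = act_word u' w"
  using assms
proof (induction arbitrary: w rule: artin_eq.induct)
  case (red u w' x)
  let ?z = "fst x \<in> X"
  have x: "on_side ?z [x, flip x]"
    using letter_on_side[OF red(3)] by (cases x) (auto simp: flip_def)
  have w': "reduced (snd (act_word w' w))"
    using reduced_act_word[OF red(2) red(4)] .
  have "factor_eq ?z [x, flip x] []"
    using x by (intro artin_eq_cancel_pair) auto
  then have "act_word [x, flip x] (act_word w' w) = act_word w' w"
    using act_word_on_side[OF x w'] act_factor_cong[OF _ w'] act_factor_Nil[OF w'] by metis
  then show ?case
    by (simp add: act_word_append del: append_Cons)
next
  case (braid u w' a b)
  obtain z where ab: "a \<in> side z" "b \<in> side z"
    using edge_side[OF braid(5,3,4)] by (metis side_def)
  then have on_side: "on_side z (alt_prod a b (m a b))" "on_side z (alt_prod b a (m a b))"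
    by (auto simp: alt_prod_def)
  have w': "reduced (snd (act_word w' w))"
    using reduced_act_word[OF braid(2) braid(6)] .
  have "factor_eq z ([] @ alt_prod a b (m a b) @ []) ([] @ alt_prod b a (m a b) @ [])"
    using ab braid(5) by (intro artin_eq.braid) (auto simp: induced_edges_def)
  then have "act_word (alt_prod a b (m a b)) (act_word w' w) = act_word (alt_prod b a (m a b)) (act_word w' w)"
    using act_word_on_side[OF on_side(1) w'] act_word_on_side[OF on_side(2) w'] act_factor_cong[OF _ w']
    by simp
  then show ?case
    by (simp add: act_word_append)
qed metis+

lemma act_word_nf_word:
  "word_over VV u \<Longrightarrow> reduced (snd w) \<Longrightarrow> ambient_eq (u @ nf_word w) (nf_word (act_word u w))"
proof (induction u)
  case Nil
  then show ?case by (simp add: artin_eq.refl word_over_nf_word)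
next
  case (Cons x u)
  then have "fst x \<in> VV" "word_over VV [x]" "reduced (snd (act_word u w))"
    using reduced_act_word by auto
  moreover have "ambient_eq (u @ nf_word w) (nf_word (act_word u w))"
    using Cons by auto
  ultimately have "ambient_eq ([x] @ u @ nf_word w) ([x] @ nf_word (act_word u w))"
    using artin_eq_append_left by blast
  moreover have "ambient_eq ([x] @ nf_word (act_word u w)) (nf_word (act_word (x # u) w))"
    using act_factor_nf_word[OF letter_on_side] \<open>fst x \<in> VV\<close> \<open>reduced (snd (act_word u w))\<close>
    by (simp add: act_word_Cons)
  ultimately show ?case
    by (auto intro: artin_eq.trans)
qed

lemma act_word_concat: "reduced L \<Longrightarrow> act_word (concat (map snd L)) (0, []) = (0, L)"
proof (induction L)
  case (Cons p L)
  obtain z t where p: "p = (z, t)"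
    by (cases p)
  then have t: "syllable z t" and L: "reduced L" and head: "not_headed_by z L"
    using Cons.prems by auto
  have "act_word (concat (map snd (p # L))) (0, []) = act_factor z t (0, L)"
    using act_word_on_side t L Cons.IH by (simp add: act_word_append p syllable_def)
  also have "\<dots> = (0, p # L)"
  proof -
    have "absorb z t (0, L) = t"
      by (simp add: absorb_def take_syllable_not_headed_by[OF head])
    moreover have "coset_exp z t = 0"
      using t by (intro coset_exp_eqI) (simp add: syllable_def artin_eq.refl)
    ultimately show ?thesis
      using t p by (simp add: act_factor_def syllable_def take_syllable_not_headed_by[OF head])
  qed
  finally show ?case .
qed simp

lemma act_word_winv_prepends:
  assumes "reduced M" and "reduced N" and "M \<noteq> [] \<Longrightarrow> not_headed_by (fst (hd M)) N"
  obtains n' M' where "act_word (winv (concat (map snd M))) (n, N) = (n', M' @ N)"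
  using assms
proof (induction M arbitrary: n N thesis)
  case Nil
  then show ?case by simp
next
  case (Cons p M)
  obtain z t where p: "p = (z, t)"
    by (cases p)
  then have t: "syllable z t" and M: "reduced M" and "not_headed_by z M"
    using Cons.prems(2) by auto
  then have t': "on_side z (winv t)"
    by (simp add: syllable_def)
  have "\<not> same_vcoset z (winv t) []"
  proof
    assume "same_vcoset z (winv t) []"
    then obtain j where "factor_eq z (winv t) (v_pow j)"
      by (auto simp: same_vcoset_def)
    from artin_eq_winv[OF this] have "same_vcoset z t []"
      using t by (auto simp: same_vcoset_def syllable_def winv_v_pow)
    then show False
      using t coset_rep(2)[where z = z and g = t] by (simp add: syllable_def)
  qed
  then obtain n1 t1 where step: "act_factor z (winv t) (n, N) = (n1, (z, t1) # N)"
    using act_factor_prepends[OF t'] Cons.prems(3,4) p by (metis list.distinct(1) list.sel(1) prod.sel)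
  then have N1: "reduced ((z, t1) # N)"
    using reduced_act_factor[OF t', of "(n, N)"] Cons.prems(3) by simp
  have "M \<noteq> [] \<Longrightarrow> not_headed_by (fst (hd M)) ((z, t1) # N)"
    using \<open>not_headed_by z M\<close> by (auto simp: not_headed_by_def)
  then obtain n' M' where "act_word (winv (concat (map snd M))) (n1, (z, t1) # N) = (n', M' @ (z, t1) # N)"
    using Cons.IH[OF _ M N1] by blast
  moreover have "act_word (winv t) (n, N) = (n1, (z, t1) # N)"
    using act_word_on_side[OF t'] Cons.prems(3) step by simp
  ultimately show ?case
    using Cons.prems(1)[of n' "M' @ [(z, t1)]"] p by (simp add: act_word_append)
qed

lemma act_word_conjugate_by_reduced:
  assumes L: "reduced L" "not_headed_by z L"
    and h: "on_side z h" "\<not> same_vcoset z h []"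
  obtains n' M' t' where
    "act_word (winv (concat (map snd L)) @ h @ concat (map snd L)) (0, []) = (n', M' @ (z, t') # L)"
proof -
  obtain n1 t' where step: "act_factor z h (0, L) = (n1, (z, t') # L)"
    using act_factor_prepends[OF h, of "(0, L)"] L by auto
  then have "reduced ((z, t') # L)"
    using reduced_act_factor[OF h(1), of "(0, L)"] L by simp
  moreover have "L \<noteq> [] \<Longrightarrow> not_headed_by (fst (hd L)) ((z, t') # L)"
    using L(2) by (auto simp: not_headed_by_def)
  ultimately obtain n' M' where
    "act_word (winv (concat (map snd L))) (n1, (z, t') # L) = (n', M' @ (z, t') # L)"
    using act_word_winv_prepends L(1) by blast
  moreover have "act_word h (act_word (concat (map snd L)) (0, [])) = (n1, (z, t') # L)"
    using act_word_concat[OF L(1)] act_word_on_side[OF h(1)] L(1) step by simp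
  ultimately show ?thesis
    using that by (simp add: act_word_append)
qed

lemma act_word_on_side_short:
  assumes "on_side z w"
  shows "snd (act_word w (0, [])) = [] \<or> (\<exists>t. snd (act_word w (0, [])) = [(z, t)])"
  using act_word_on_side[OF assms] act_factor_on_trivial by simp

lemma conjugate_leaves_v_subgroup:
  assumes ab: "\<not> ambient_eq [(a, True)] [(b, True)]"
  obtains c where "c \<in> {a, b}" and "\<not> same_vcoset True (winv g @ [(c, True)] @ g) []"
proof -
  have to_v: "factor_eq True (winv g @ [(c, True)] @ g) (v_pow 1)"
    if trivial: "same_vcoset True (winv g @ [(c, True)] @ g) []" for c
  proof -
    obtain j where j: "factor_eq True (winv g @ [(c, True)] @ g) (v_pow j)"
      using trivial unfolding same_vcoset_Nil_iff by blast
    then have "j = 1"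
      using artin_eq_exp_sum[OF j] by (simp add: exp_sum_v_pow)
    then show ?thesis
      using j by simp
  qed
  have "\<not> (\<forall>c\<in>{a, b}. same_vcoset True (winv g @ [(c, True)] @ g) [])"
  proof
    assume "\<forall>c\<in>{a, b}. same_vcoset True (winv g @ [(c, True)] @ g) []"
    then have "ambient_eq (winv g @ [(a, True)] @ g) (winv g @ [(b, True)] @ g)"
      using to_v factor_eq_imp_ambient_eq by (blast intro: artin_eq.sym artin_eq.trans)
    then have "ambient_eq [(a, True)] [(b, True)]"
      by (blast intro: artin_eq_cancel_left artin_eq_cancel_right)
    with ab show False ..
  qed
  then show ?thesis
    using that by blast
qed

lemma side_True [simp]: "side True = X"
  by (simp add: side_def)

lemma obtain_factor_prefix:
  assumes k: "word_over VV k"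
  obtains g L where "on_side z g" "reduced L" "not_headed_by z L" "ambient_eq k (g @ concat (map snd L))"
proof -
  obtain n L where nL: "act_word k (0, []) = (n, L)"
    by (cases "act_word k (0, [])")
  then have L: "reduced L"
    using reduced_act_word[OF k, of "(0, [])"] by simp
  have "on_side z (v_pow n @ fst (take_syllable z L))"
    using on_side_take_syllable[OF L, of z] on_side_v_pow[where z = z and n = n] by simp
  moreover have "ambient_eq k ((v_pow n @ fst (take_syllable z L)) @ concat (map snd (snd (take_syllable z L))))"
    using act_word_nf_word[OF k, of "(0, [])"] nL concat_take_syllable[of L z] by (simp add: nf_word_def)
  ultimately show ?thesis
    using that reduced_take_syllable[OF L, of z] by blast
qed

lemma conjugator_in_X:
  assumes ab: "a \<in> X" "b \<in> X" "\<not> ambient_eq [(a, True)] [(b, True)]" and k: "word_over VV k"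
    and conj: "\<And>c. c \<in> {a, b} \<Longrightarrow> \<exists>w. on_side z w \<and> ambient_eq [(c, True)] (k @ w @ winv k)"
  shows "z" and "\<exists>g. word_over X g \<and> ambient_eq k g"
proof -
  obtain g L' where g: "on_side True g" and L': "reduced L'" "not_headed_by True L'"
    and k_nf: "ambient_eq k (g @ concat (map snd L'))"
    using obtain_factor_prefix[OF k] by blast
  obtain c where c: "c \<in> {a, b}" and nontriv: "\<not> same_vcoset True (winv g @ [(c, True)] @ g) []"
    using conjugate_leaves_v_subgroup[OF ab(3)] by blast
  have "on_side True (winv g @ [(c, True)] @ g)"
    using g c ab by auto
  then obtain n' M' t' where long:
    "act_word (winv (concat (map snd L')) @ (winv g @ [(c, True)] @ g) @ concat (map snd L')) (0, [])
      = (n', M' @ (True, t') # L')"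
    using act_word_conjugate_by_reduced[OF L'] nontriv by blast
  obtain w where w: "on_side z w" "ambient_eq (winv k @ [(c, True)] @ k) w"
    using conj[OF c] artin_eq_conj_move k by blast
  have "ambient_eq [(c, True)] [(c, True)]"
    using c ab union by (intro artin_eq.refl) auto
  then have "ambient_eq (winv k @ [(c, True)] @ k)
      (winv (g @ concat (map snd L')) @ [(c, True)] @ g @ concat (map snd L'))"
    using k_nf by (intro artin_eq_append artin_eq_winv)
  then have "ambient_eq w (winv (concat (map snd L')) @ (winv g @ [(c, True)] @ g) @ concat (map snd L'))"
    using w(2) by (auto intro: artin_eq.sym artin_eq.trans)
  then have "snd (act_word w (0, [])) = M' @ (True, t') # L'"
    using long act_word_artin_eq[of _ _ "(0, [])"] by simp
  then have "M' = [] \<and> L' = [] \<and> z"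
    using act_word_on_side_short[OF w(1)] by (cases M') auto
  then show "z" and "\<exists>g. word_over X g \<and> ambient_eq k g"
    using g k_nf by auto
qed

text \<open>Collapsing \<open>Y\<close> onto \<open>v\<close> is a retraction \<open>A\<^sub>\<Gamma> \<rightarrow> A\<^sub>X\<close>: a braid relation of \<open>Y\<close>
  becomes the trivial relation \<open>v\<^sup>m = v\<^sup>m\<close>.\<close>

definition retract_letter :: "'v letter \<Rightarrow> 'v letter" where
  "retract_letter x = (if fst x \<in> X then x else (v, snd x))"

lemma retract_letter_flip: "retract_letter (flip x) = flip (retract_letter x)"
  by (simp add: retract_letter_def flip_def)

lemma map_retract_letter_alt_prod:
  "map retract_letter (alt_prod a b n) = alt_prod (if a \<in> X then a else v) (if b \<in> X then b else v) n"
  by (simp add: alt_prod_def retract_letter_def)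

lemma map_retract_letter_id: "word_over X u \<Longrightarrow> map retract_letter u = u"
  by (induction u) (auto simp: retract_letter_def)

lemma word_over_map_retract_letter: "word_over VV u \<Longrightarrow> word_over X (map retract_letter u)"
  using inter by (auto simp: retract_letter_def)

lemma artin_eq_map_retract_letter:
  "ambient_eq u w \<Longrightarrow> factor_eq True (map retract_letter u) (map retract_letter w)"
proof (induction rule: artin_eq.induct)
  case (refl w)
  then show ?case
    using word_over_map_retract_letter by (intro artin_eq.refl) auto
next
  case (red u w x)
  have "fst (retract_letter x) \<in> X"
    using inter by (auto simp: retract_letter_def)
  then have "factor_eq True (map retract_letter u @ [retract_letter x, flip (retract_letter x)] @ map retract_letter w)
      (map retract_letter u @ map retract_letter w)"
    using word_over_map_retract_letter[OF red(1)] word_over_map_retract_letter[OF red(2)]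
    by (intro artin_eq.red) auto
  then show ?case
    by (simp add: retract_letter_flip)
next
  case (braid u w a b)
  show ?case
  proof (cases "a \<in> X \<and> b \<in> X")
    case True
    then have "factor_eq True (map retract_letter u @ alt_prod a b (m a b) @ map retract_letter w)
        (map retract_letter u @ alt_prod b a (m a b) @ map retract_letter w)"
      using word_over_map_retract_letter[OF braid(1)] word_over_map_retract_letter[OF braid(2)] braid(5)
      by (intro artin_eq.braid) (auto simp: induced_edges_def)
    then show ?thesis
      using True by (simp add: map_retract_letter_alt_prod)
  next
    case False
    then have "a \<in> Y" "b \<in> Y"
      using edge_side[OF braid(5,3,4)] by auto
    then have "(if a \<in> X then a else v) = v" "(if b \<in> X then b else v) = v"
      using inter by auto
    moreover have "word_over VV (u @ alt_prod a b (m a b) @ w)"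
      using braid by (auto simp: alt_prod_def)
    note artin_eq.refl[OF word_over_map_retract_letter[OF this], of "induced_edges E X" m]
    ultimately show ?thesis
      by (simp add: map_retract_letter_alt_prod)
  qed
qed (auto intro: artin_eq.sym artin_eq.trans)

lemma ambient_eq_imp_factor_eq_X:
  "ambient_eq u w \<Longrightarrow> word_over X u \<Longrightarrow> word_over X w \<Longrightarrow> artin_eq X (induced_edges E X) m u w"
  using artin_eq_map_retract_letter map_retract_letter_id by fastforce

lemma conj_restricts_to_X:
  assumes L: "L1 \<subseteq> X" "L2 \<subseteq> X" and g: "word_over X g" "ambient_eq k g"
    and conj: "\<exists>w. word_over L2 w \<and> ambient_eq h (k @ w @ winv k)" and h: "word_over L1 h"
  shows "\<exists>w. word_over L2 w \<and> artin_eq X (induced_edges E X) m h (g @ w @ winv g)"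
proof -
  obtain w where w: "word_over L2 w" "ambient_eq h (k @ w @ winv k)"
    using conj by blast
  have "word_over VV w"
    using w(1) L(2) union by auto
  then have "ambient_eq (k @ w @ winv k) (g @ w @ winv g)"
    using g(2) by (intro artin_eq_append artin_eq_winv artin_eq.refl)
  then have "ambient_eq h (g @ w @ winv g)"
    using w(2) by (rule artin_eq.trans[rotated])
  then show ?thesis
    using w(1) h g(1) L by (intro exI[of _ w] conjI ambient_eq_imp_factor_eq_X) auto
qed

lemma big_chunk_conj_descends_to_X:
  assumes lsg: "labelled_simplicial_graph VV E m"
    and L1: "chunk VV E L1" "L1 \<subseteq> X" and L2: "chunk VV E L2" and k: "word_over VV k"
    and conj: "\<And>h. word_over L1 h \<Longrightarrow> \<exists>w. word_over L2 w \<and> ambient_eq h (k @ w @ winv k)"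
  obtains g where "L2 \<subseteq> X" "word_over X g" "ambient_eq k g"
    "\<And>h. word_over L1 h \<Longrightarrow> \<exists>w. word_over L2 w \<and> artin_eq X (induced_edges E X) m h (g @ w @ winv g)"
proof -
  obtain a b where ab: "a \<in> L1" "b \<in> L1" "a \<noteq> b"
    using chunk_obtain_two_vertices[OF L1(1)] .
  have "L2 \<subseteq> side (L2 \<subseteq> X)"
    using chunk_subset_side[OF L2] by (auto simp: side_def)
  have conj_ab: "\<exists>w. on_side (L2 \<subseteq> X) w \<and> ambient_eq [(c, True)] (k @ w @ winv k)"
    if c: "c \<in> {a, b}" for c
  proof -
    obtain w where "word_over L2 w" "ambient_eq [(c, True)] (k @ w @ winv k)"
      using conj[of "[(c, True)]"] c ab by auto
    moreover from this(1) have "on_side (L2 \<subseteq> X) w"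
      using \<open>L2 \<subseteq> side (L2 \<subseteq> X)\<close> by auto
    ultimately show ?thesis
      by blast
  qed
  have "a \<in> X" "b \<in> X"
    using ab L1(2) by auto
  note conjugator = conjugator_in_X[OF this artin_generators_distinct[OF lsg ab(3)] k conj_ab]
  obtain g where g: "word_over X g" "ambient_eq k g"
    using conjugator(2) by blast
  have L2X: "L2 \<subseteq> X"
    using conjugator(1) .
  have "\<exists>w. word_over L2 w \<and> artin_eq X (induced_edges E X) m h (g @ w @ winv g)" if "word_over L1 h" for h
    using conj_restricts_to_X[OF L1(2) L2X g conj[OF that] that] .
  then show ?thesis
    using that L2X g by blast
qed

end


section \<open>Descent along a separating vertex\<close>

lemma separating_vertex_descent:
  assumes lsg: "labelled_simplicial_graph VV E m" and conn: "connected_on E VV"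
    and sep: "separating_vertex E VV v"
    and L1: "big_chunk VV E L1" and L2: "big_chunk VV E L2" and k: "word_over VV k"
    and conj: "\<And>h. word_over L1 h \<Longrightarrow> \<exists>w. word_over L2 w \<and> artin_eq VV E m h (k @ w @ winv k)"
  obtains S g where "S \<subset> VV" "connected_on E S" "L1 \<subseteq> S" "L2 \<subseteq> S" "word_over S g" "artin_eq VV E m k g"
    "\<And>h. word_over L1 h \<Longrightarrow> \<exists>w. word_over L2 w \<and> artin_eq S (induced_edges E S) m h (g @ w @ winv g)"
proof -
  note result = that
  have chunks: "chunk VV E L1" "chunk VV E L2"
    using L1 L2 by (simp_all add: big_chunk_def)
  have descend: thesis
    if split: "cut_vertex_split VV E S T v" and S: "S \<noteq> VV" "connected_on E S" "L1 \<subseteq> S" for S T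
  proof -
    interpret artin_amalgam VV E S T v m
      using split by (simp add: artin_amalgam_def)
    obtain g where "L2 \<subseteq> S" "word_over S g" "artin_eq VV E m k g"
      "\<And>h. word_over L1 h \<Longrightarrow> \<exists>w. word_over L2 w \<and> artin_eq S (induced_edges E S) m h (g @ w @ winv g)"
      using big_chunk_conj_descends_to_X[OF lsg chunks(1) S(3) chunks(2) k conj] by blast
    moreover have "S \<subset> VV"
      using union S(1) by blast
    ultimately show thesis
      using result S by blast
  qed
  obtain a b where "a \<in> L1" "b \<in> L1" "a \<noteq> b"
    using chunk_obtain_two_vertices[OF chunks(1)] .
  moreover have "L1 \<subseteq> VV"
    using chunks(1) by (simp add: chunk_def)
  ultimately have "VV - {v} \<noteq> {}"
    by blast
  moreover have "\<And>a b. E a b \<Longrightarrow> E b a"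
    using lsg by (simp add: labelled_simplicial_graph_def)
  ultimately obtain X Y where split: "cut_vertex_split VV E X Y v"
    and "X \<noteq> VV" "Y \<noteq> VV" "connected_on E X" "connected_on E Y"
    using separating_vertex_split conn sep by metis
  moreover have "L1 \<subseteq> X \<or> L1 \<subseteq> Y"
    using cut_vertex_split.chunk_subset_side[OF split chunks(1)] .
  ultimately show thesis
    using descend cut_vertex_split.swap[OF split] by blast
qed

lemma big_chunk_conj_inclusion:
  assumes "labelled_simplicial_graph VV E m" and "finite VV" and "connected_on E VV"
    and "big_chunk VV E L1" and "big_chunk VV E L2" and "word_over VV k"
    and "\<And>h. word_over L1 h \<Longrightarrow> \<exists>w. word_over L2 w \<and> artin_eq VV E m h (k @ w @ winv k)"
  shows "L1 = L2 \<and> (\<exists>g. word_over L1 g \<and> artin_eq VV E m k g)"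
  using assms
proof (induction "card VV" arbitrary: VV E L1 L2 k rule: less_induct)
  case less
  note lsg = less.prems(1) and conn = less.prems(3) and L1 = less.prems(4) and L2 = less.prems(5)
  show ?case
  proof (cases "\<exists>v. separating_vertex E VV v")
    case False
    then have "chunk VV E VV"
      using conn by (auto simp: chunk_def)
    then have "L1 = VV" "L2 = VV"
      using L1 L2 by (auto simp: big_chunk_def chunk_def)
    then show ?thesis
      using less.prems(6) artin_eq.refl by blast
  next
    case True
    then obtain v where "separating_vertex E VV v"
      by blast
    from separating_vertex_descent[OF lsg conn this L1 L2 less.prems(6,7)]
    obtain S g where S: "S \<subset> VV" "connected_on E S" "L1 \<subseteq> S" "L2 \<subseteq> S"
      and g: "word_over S g" "artin_eq VV E m k g"
      and conj: "\<And>h. word_over L1 h \<Longrightarrow> \<exists>w. word_over L2 w \<and> artin_eq S (induced_edges E S) m h (g @ w @ winv g)"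
      by blast
    have "card S < card VV"
      using less.prems(2) S(1) by (rule psubset_card_mono)
    from less.hyps[OF this labelled_simplicial_graph_induced[OF lsg] finite_subset[of S VV]
        connected_on_induced[THEN iffD2, OF subset_refl S(2)]
        big_chunk_induced[of S VV E L1] big_chunk_induced[of S VV E L2] g(1) conj]
    obtain g' where "L1 = L2" "word_over L1 g'" "artin_eq S (induced_edges E S) m g g'"
      using S less.prems(2) L1 L2 by auto
    moreover have "artin_eq VV E m g g'"
      using artin_eq_mono[OF \<open>artin_eq S (induced_edges E S) m g g'\<close>] S(1)
      by (auto simp: induced_edges_def)
    ultimately show ?thesis
      using g(2) by (blast intro: artin_eq.trans)
  qed
qed

lemma artin_elem_eq_iff:
  "word_over VV u \<Longrightarrow> artin_elem VV E m u = artin_elem VV E m w \<longleftrightarrow> artin_eq VV E m u w"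
  unfolding artin_elem_def by (blast intro: artin_eq.refl artin_eq.sym artin_eq.trans)

lemma std_parabolic_subset_conj_parabolic_words:
  assumes "L1 \<subseteq> VV" and "std_parabolic VV E m L1 \<subseteq> conj_parabolic VV E m k L2" and "word_over L1 h"
  shows "\<exists>w. word_over L2 w \<and> artin_eq VV E m h (k @ w @ winv k)"
proof -
  have "artin_elem VV E m h \<in> conj_parabolic VV E m k L2"
    using assms(2,3) by (auto simp: std_parabolic_def)
  then obtain w where "word_over L2 w" "artin_elem VV E m h = artin_elem VV E m (k @ w @ winv k)"
    by (auto simp: conj_parabolic_def)
  moreover have "word_over VV h"
    using assms(1,3) by auto
  ultimately show ?thesis
    using artin_elem_eq_iff by blast
qed

theorem lemma5p3:
  fixes VV :: "'v set" and E :: "'v \<Rightarrow> 'v \<Rightarrow> bool" and m :: "'v \<Rightarrow> 'v \<Rightarrow> nat"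
    and L1 L2 :: "'v set" and k :: "'v word"
  assumes "labelled_simplicial_graph VV E m"
    and "finite VV" and "connected_on E VV" and "card VV \<ge> 3"
    and "big_chunk VV E L1" and "big_chunk VV E L2"
    and "set k \<subseteq> VV \<times> UNIV"
    and "std_parabolic VV E m L1 \<subseteq> conj_parabolic VV E m k L2"
  shows "std_parabolic VV E m L1 = std_parabolic VV E m L2 \<and> artin_elem VV E m k \<in> std_parabolic VV E m L1"
proof -
  have "L1 \<subseteq> VV"
    using assms(5) by (simp add: big_chunk_def chunk_def)
  then obtain g where "L1 = L2" "word_over L1 g" "artin_eq VV E m k g"
    using big_chunk_conj_inclusion[OF assms(1,2,3,5,6,7)] std_parabolic_subset_conj_parabolic_words assms(8)
    by metis
  moreover have "artin_elem VV E m k = artin_elem VV E m g"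
    using artin_elem_eq_iff assms(7) \<open>artin_eq VV E m k g\<close> by blast
  ultimately show ?thesis
    by (auto simp: std_parabolic_def)
qed

end
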